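(* For every graph $G$ there exists a pot $P$ with $G\in\mathcal{O}(P)$, $\#\Sigma(P)=1$, and $\#P=T_1(G)$.
   Context: Fix a set $\Sigma$ of symbols (bond-edge types) and a disjoint copy $\hat\Sigma=\{\hat a:a\in\Sigma\}$ with $\hat{\hat a}=a$; elements of $\Sigma\cup\hat\Sigma$ are cohesive-end types. A tile is a finite multiset of cohesive-end types. A pot is a finite set $P$ of tiles such that whenever $x$ occurs in a tile of $P$, $\hat x$ occurs in some tile of $P$; $\#P$ is the number of tiles of $P$ and $\Sigma(P)$ is the set of bond-edge types $a\in\Sigma$ such that $a$ or $\hat a$ occurs in a tile of $P$. Graphs are finite, loops and multiple edges allowed. An assembly design of $G$ labels the half-edges of $G$ by cohesive-end types so that the two half-edges of each edge get complementary labels $x,\hat x$; $t_v$ is the multiset of labels at vertex $v$, $P_\lambda(G)=\{t_v:v\in V(G)\}$, and $G\in\mathcal{O}(P)$ ($P$ realizes $G$) means some assembly design $\lambda$ has $P_\lambda(G)\subseteq P$. $T_1(G)=\min\{\#P: G\in\mathcal{O}(P)\}$. *)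

theory Defs
  imports Main "HOL-Library.Multiset"
begin

text \<open>Cohesive-end types: a pair (a, h) with a a bond-edge type (symbol) and
  h = True meaning the hatted copy.\<close>
type_synonym 's cend = "'s \<times> bool"
type_synonym 's tile = "'s cend multiset"

definition hat :: "'s cend \<Rightarrow> 's cend" where
  "hat x = (fst x, \<not> snd x)"

definition is_pot :: "'s tile set \<Rightarrow> bool" where
  "is_pot P \<longleftrightarrow> finite P \<and>
     (\<forall>t\<in>P. \<forall>x. x \<in># t \<longrightarrow> (\<exists>t'\<in>P. hat x \<in># t'))"

definition bond_types :: "'s tile set \<Rightarrow> 's set" where
  "bond_types P = {a. \<exists>t\<in>P. (a, False) \<in># t \<or> (a, True) \<in># t}"

text \<open>A finite multigraph (loops and multiple edges allowed): vertex set V,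
  edge set E, each edge e has two ends; half-edge (e,False) sits at fst (ends e),
  half-edge (e,True) at snd (ends e).\<close>
definition graph :: "'v set \<Rightarrow> 'e set \<Rightarrow> ('e \<Rightarrow> 'v \<times> 'v) \<Rightarrow> bool" where
  "graph V E ends \<longleftrightarrow> finite V \<and> finite E \<and> (\<forall>e\<in>E. fst (ends e) \<in> V \<and> snd (ends e) \<in> V)"

definition half_end :: "('e \<Rightarrow> 'v \<times> 'v) \<Rightarrow> 'e \<times> bool \<Rightarrow> 'v" where
  "half_end ends h = (if snd h then snd (ends (fst h)) else fst (ends (fst h)))"

definition half_edges_at :: "'e set \<Rightarrow> ('e \<Rightarrow> 'v \<times> 'v) \<Rightarrow> 'v \<Rightarrow> ('e \<times> bool) set" where
  "half_edges_at E ends v = {h. fst h \<in> E \<and> half_end ends h = v}"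

definition assembly_design ::
  "'e set \<Rightarrow> ('e \<times> bool \<Rightarrow> 's cend) \<Rightarrow> bool" where
  "assembly_design E lam \<longleftrightarrow> (\<forall>e\<in>E. lam (e, True) = hat (lam (e, False)))"

definition vtile ::
  "'e set \<Rightarrow> ('e \<Rightarrow> 'v \<times> 'v) \<Rightarrow> ('e \<times> bool \<Rightarrow> 's cend) \<Rightarrow> 'v \<Rightarrow> 's tile" where
  "vtile E ends lam v = image_mset lam (mset_set (half_edges_at E ends v))"

definition design_pot ::
  "'v set \<Rightarrow> 'e set \<Rightarrow> ('e \<Rightarrow> 'v \<times> 'v) \<Rightarrow> ('e \<times> bool \<Rightarrow> 's cend) \<Rightarrow> 's tile set" where
  "design_pot V E ends lam = vtile E ends lam ` V"

definition realizes ::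
  "'s tile set \<Rightarrow> 'v set \<Rightarrow> 'e set \<Rightarrow> ('e \<Rightarrow> 'v \<times> 'v) \<Rightarrow> bool" where
  "realizes P V E ends \<longleftrightarrow>
     (\<exists>lam. assembly_design E lam \<and> design_pot V E ends lam \<subseteq> P)"

definition T1 :: "'s itself \<Rightarrow> 'v set \<Rightarrow> 'e set \<Rightarrow> ('e \<Rightarrow> 'v \<times> 'v) \<Rightarrow> nat" where
  "T1 _ V E ends = (LEAST n. \<exists>P :: 's tile set. is_pot P \<and> realizes P V E ends \<and> card P = n)"

end

theory Submission
  imports Defs
begin

(* Renaming bond-edge types by any map f keeps complementarity, so it turns pots into pots and
   assembly designs into assembly designs, and it cannot increase the number of tiles. Applied
   with a constant map to a pot of minimum size T_1(G), it gives a pot of the same size with a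
   single bond-edge type; that type really occurs because G has an edge. *)

lemma hat_hat [simp]: "hat (hat x) = x"
  by (simp add: hat_def)

lemma hat_apfst: "hat (apfst f x) = apfst f (hat x)"
  by (simp add: hat_def apfst_def map_prod_def split_beta)

lemma finite_half_edges_at:
  assumes "finite E"
  shows "finite (half_edges_at E ends v)"
proof (rule finite_subset)
  show "half_edges_at E ends v \<subseteq> E \<times> UNIV"
    by (auto simp: half_edges_at_def)
  show "finite (E \<times> (UNIV :: bool set))"
    using assms by simp
qed

lemma mem_vtile_iff:
  assumes "finite E"
  shows "x \<in># vtile E ends lam v \<longleftrightarrow> (\<exists>h \<in> half_edges_at E ends v. x = lam h)"
  unfolding vtile_def using finite_half_edges_at[OF assms, of ends v] by auto

lemma is_pot_design_pot:
  assumes g: "graph V E ends" and ad: "assembly_design E lam"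
  shows "is_pot (design_pot V E ends lam)"
  unfolding is_pot_def
proof (intro conjI ballI allI impI)
  have fE: "finite E" using g by (simp add: graph_def)
  show "finite (design_pot V E ends lam)"
    using g by (simp add: design_pot_def graph_def)
  fix t x
  assume "t \<in> design_pot V E ends lam" and "x \<in># t"
  then obtain e b where "e \<in> E" and x: "x = lam (e, b)"
    by (auto simp: design_pot_def mem_vtile_iff[OF fE] half_edges_at_def)
  let ?w = "half_end ends (e, \<not> b)"
  have "hat x = lam (e, \<not> b)"
    using ad \<open>e \<in> E\<close> by (cases b) (simp_all add: x assembly_design_def)
  then have "hat x \<in># vtile E ends lam ?w"
    using \<open>e \<in> E\<close> by (auto simp: mem_vtile_iff[OF fE] half_edges_at_def)
  moreover have "?w \<in> V"
    using g \<open>e \<in> E\<close> by (auto simp: graph_def half_end_def)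
  ultimately show "\<exists>t' \<in> design_pot V E ends lam. hat x \<in># t'"
    by (auto simp: design_pot_def)
qed

definition relabel_pot :: "('s \<Rightarrow> 't) \<Rightarrow> 's tile set \<Rightarrow> 't tile set" where
  "relabel_pot f P = image_mset (apfst f) ` P"

lemma is_pot_relabel_pot:
  assumes "is_pot P"
  shows "is_pot (relabel_pot f P)"
  unfolding is_pot_def
proof (intro conjI ballI allI impI)
  show "finite (relabel_pot f P)"
    using assms by (simp add: is_pot_def relabel_pot_def)
  fix t x
  assume "t \<in> relabel_pot f P" and "x \<in># t"
  then obtain s y where "s \<in> P" "y \<in># s" and x: "x = apfst f y"
    by (auto simp: relabel_pot_def)
  then obtain s' where "s' \<in> P" "hat y \<in># s'"
    using assms unfolding is_pot_def by blast
  then have "hat x \<in># image_mset (apfst f) s'"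
    by (simp add: x hat_apfst)
  with \<open>s' \<in> P\<close> show "\<exists>t' \<in> relabel_pot f P. hat x \<in># t'"
    by (auto simp: relabel_pot_def)
qed

lemma realizes_relabel_pot:
  assumes "realizes P V E ends"
  shows "realizes (relabel_pot f P) V E ends"
proof -
  obtain lam where ad: "assembly_design E lam" and sub: "design_pot V E ends lam \<subseteq> P"
    using assms by (auto simp: realizes_def)
  have "assembly_design E (apfst f \<circ> lam)"
    using ad by (simp add: assembly_design_def hat_apfst)
  moreover have "design_pot V E ends (apfst f \<circ> lam) \<subseteq> relabel_pot f P"
  proof -
    have "design_pot V E ends (apfst f \<circ> lam) = relabel_pot f (design_pot V E ends lam)"
      by (auto simp: design_pot_def vtile_def relabel_pot_def multiset.map_comp image_image)
    also have "\<dots> \<subseteq> relabel_pot f P"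
      using sub by (auto simp: relabel_pot_def)
    finally show ?thesis .
  qed
  ultimately show ?thesis
    unfolding realizes_def by blast
qed

lemma card_relabel_pot_le:
  assumes "finite P"
  shows "card (relabel_pot f P) \<le> card P"
  unfolding relabel_pot_def using assms by (rule card_image_le)

lemma mem_bond_types_iff: "a \<in> bond_types P \<longleftrightarrow> (\<exists>t \<in> P. \<exists>b. (a, b) \<in># t)"
  unfolding bond_types_def by (auto; metis (full_types))

lemma bond_types_relabel_pot: "bond_types (relabel_pot f P) = f ` bond_types P"
proof (intro set_eqI iffI)
  fix a
  assume "a \<in> bond_types (relabel_pot f P)"
  then obtain t c b where "t \<in> P" "(c, b) \<in># t" "a = f c"
    by (auto simp: mem_bond_types_iff relabel_pot_def)
  then have "c \<in> bond_types P"
    by (auto simp: mem_bond_types_iff)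
  with \<open>a = f c\<close> show "a \<in> f ` bond_types P"
    by blast
next
  fix a
  assume "a \<in> f ` bond_types P"
  then obtain t c b where "t \<in> P" "(c, b) \<in># t" "a = f c"
    by (auto simp: mem_bond_types_iff)
  then have "(a, b) \<in># image_mset (apfst f) t"
    by (metis apfst_conv image_eqI set_image_mset)
  with \<open>t \<in> P\<close> show "a \<in> bond_types (relabel_pot f P)"
    by (auto simp: mem_bond_types_iff relabel_pot_def)
qed

lemma bond_types_nonempty:
  assumes g: "graph V E ends" and "E \<noteq> {}" and "realizes P V E ends"
  shows "bond_types P \<noteq> {}"
proof -
  obtain lam where sub: "design_pot V E ends lam \<subseteq> P"
    using assms(3) by (auto simp: realizes_def)
  obtain e where "e \<in> E"
    using assms(2) by blast
  let ?v = "fst (ends e)"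
  have "?v \<in> V"
    using g \<open>e \<in> E\<close> by (simp add: graph_def)
  then have "vtile E ends lam ?v \<in> P"
    using sub by (auto simp: design_pot_def)
  moreover have "lam (e, False) \<in># vtile E ends lam ?v"
    using g \<open>e \<in> E\<close>
    by (auto simp: graph_def mem_vtile_iff half_edges_at_def half_end_def)
  ultimately have "fst (lam (e, False)) \<in> bond_types P"
    unfolding mem_bond_types_iff by (metis prod.collapse)
  then show ?thesis
    by blast
qed

lemma T1_le:
  fixes P :: "'s tile set"
  assumes "is_pot P" and "realizes P V E ends"
  shows "T1 TYPE('s) V E ends \<le> card P"
  unfolding T1_def by (rule Least_le) (use assms in blast)

lemma ex_pot_card_T1:
  fixes E :: "'e set"
  assumes "graph V E ends"
  shows "\<exists>P :: 's tile set. is_pot P \<and> realizes P V E ends \<and> card P = T1 TYPE('s) V E ends"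
proof -
  define lam :: "'e \<times> bool \<Rightarrow> 's cend" where "lam = apfst (\<lambda>_. undefined)"
  have "assembly_design E lam"
    by (simp add: assembly_design_def lam_def hat_def)
  then have "is_pot (design_pot V E ends lam)" and "realizes (design_pot V E ends lam) V E ends"
    using assms is_pot_design_pot by (auto simp: realizes_def)
  then have "\<exists>n. \<exists>P :: 's tile set. is_pot P \<and> realizes P V E ends \<and> card P = n"
    by blast
  then show ?thesis
    unfolding T1_def by (rule LeastI_ex)
qed

theorem lemma1:
  fixes V :: "'v set" and E :: "'e set" and ends :: "'e \<Rightarrow> 'v \<times> 'v"
  assumes "graph V E ends" and "E \<noteq> {}"
  shows "\<exists>P :: 's tile set. is_pot P \<and> realizes P V E ends
            \<and> card (bond_types P) = 1 \<and> card P = T1 TYPE('s) V E ends"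
proof -
  obtain P :: "'s tile set"
    where P: "is_pot P" "realizes P V E ends" "card P = T1 TYPE('s) V E ends"
    using ex_pot_card_T1[OF assms(1)] by blast
  define a :: 's where "a = undefined"
  define Q where "Q = relabel_pot (\<lambda>_. a) P"
  have Q: "is_pot Q" "realizes Q V E ends"
    unfolding Q_def using P is_pot_relabel_pot realizes_relabel_pot by blast+
  have "card Q \<le> card P"
    unfolding Q_def using P(1) by (simp add: is_pot_def card_relabel_pot_le)
  moreover have "T1 TYPE('s) V E ends \<le> card Q"
    using Q by (rule T1_le)
  moreover have "bond_types Q = {a}"
    using bond_types_nonempty[OF assms P(2)] by (auto simp: Q_def bond_types_relabel_pot)
  ultimately show ?thesis
    using P(3) Q by (intro exI[of _ Q]) simp
qed

end
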